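(* Let $A,\Delta A\in\mathbb{R}^{n\times m}$, $\widetilde A=A+\Delta A$, $1\le r<\min\{n,m\}$, and assume $\widetilde\sigma_r>0$ so that $\widetilde\Sigma_1$ is invertible. Let $U_1^T\widetilde U_1=Q_1SQ_2^T$ be an SVD ($Q_1,Q_2\in\mathbb{O}_r$, $S$ diagonal nonnegative) and $Q=Q_1Q_2^T$. Then \[\widetilde U_1-U_1Q=U_2U_2^T(\Delta A)V_1V_1^T\widetilde V_1\widetilde\Sigma_1^{-1}+U_2U_2^T(\Delta A)V_2V_2^T\widetilde V_1\widetilde\Sigma_1^{-1}+U_2\Sigma_2V_2^T\widetilde V_1\widetilde\Sigma_1^{-1}+U_1Q_1(S-I)Q_2^T,\] and $\|S-I\|\le\|\sin\Theta(U_1,\widetilde U_1)\|^2$.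
   Context: $A=U\Sigma V^T$, $\widetilde A=\widetilde U\widetilde\Sigma\widetilde V^T$ are full SVDs ($U,\widetilde U\in\mathbb{R}^{n\times n}$, $V,\widetilde V\in\mathbb{R}^{m\times m}$ orthogonal, singular values $\sigma_1\ge\dots$ and $\widetilde\sigma_1\ge\dots$ nonincreasing). $U=(U_1\ U_2)$, $U_1\in\mathbb{R}^{n\times r}$; $V=(V_1\ V_2)$, $V_1\in\mathbb{R}^{m\times r}$; $\widetilde U_1,\widetilde V_1$ analogously for $\widetilde A$; $\widetilde\Sigma_1=\mathrm{diag}(\widetilde\sigma_1,\dots,\widetilde\sigma_r)$; $\Sigma_2\in\mathbb{R}^{(n-r)\times(m-r)}$ is rectangular diagonal with diagonal $\sigma_{r+1},\sigma_{r+2},\dots$. $\mathbb{O}_r$ is the set of $r\times r$ orthogonal matrices. $\|\cdot\|$ is the spectral norm. For $X,\widetilde X\in\mathbb{R}^{d\times r}$ with orthonormal columns, if $\zeta_1\ge\dots\ge\zeta_r$ are the singular values of $X^T\widetilde X$, then $\sin\Theta(X,\widetilde X)=\mathrm{diag}(\sqrt{1-\zeta_1^2},\dots,\sqrt{1-\zeta_r^2})$. *)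

theory Defs
  imports "Jordan_Normal_Form.Matrix"
begin

definition orth_mat :: "nat \<Rightarrow> real mat \<Rightarrow> bool" where
  "orth_mat n Q \<longleftrightarrow> Q \<in> carrier_mat n n \<and> transpose_mat Q * Q = 1\<^sub>m n"

definition col_block :: "real mat \<Rightarrow> nat \<Rightarrow> nat \<Rightarrow> real mat" where
  "col_block M a k = mat (dim_row M) k (\<lambda>(i,j). M $$ (i, a + j))"

definition sub_block :: "real mat \<Rightarrow> nat \<Rightarrow> nat \<Rightarrow> nat \<Rightarrow> nat \<Rightarrow> real mat" where
  "sub_block M a p b q = mat p q (\<lambda>(i,j). M $$ (a + i, b + j))"

definition is_full_svd :: "real mat \<Rightarrow> real mat \<Rightarrow> real mat \<Rightarrow> real mat \<Rightarrow> bool" where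
  "is_full_svd M U Sg V \<longleftrightarrow>
     (let n = dim_row M; m = dim_col M in
       orth_mat n U \<and> orth_mat m V \<and> Sg \<in> carrier_mat n m \<and>
       (\<forall>i<n. \<forall>j<m. i \<noteq> j \<longrightarrow> Sg $$ (i,j) = 0) \<and>
       (\<forall>i<min n m. Sg $$ (i,i) \<ge> 0) \<and>
       (\<forall>i j. i \<le> j \<longrightarrow> j < min n m \<longrightarrow> Sg $$ (j,j) \<le> Sg $$ (i,i)) \<and>
       M = U * Sg * transpose_mat V)"

definition sing_vals :: "real mat \<Rightarrow> real list" where
  "sing_vals M = (THE zs. length zs = min (dim_row M) (dim_col M) \<and>
      (\<exists>U Sg V. is_full_svd M U Sg V \<and> (\<forall>i<length zs. zs ! i = Sg $$ (i,i))))"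

definition sin_theta :: "real mat \<Rightarrow> real mat \<Rightarrow> real mat" where
  "sin_theta X Xt = (let r = dim_col X; z = sing_vals (transpose_mat X * Xt) in
      mat_diag r (\<lambda>i. sqrt (1 - (z ! i)\<^sup>2)))"

definition vnorm :: "real vec \<Rightarrow> real" where
  "vnorm x = sqrt (x \<bullet> x)"

definition spec_norm :: "real mat \<Rightarrow> real" where
  "spec_norm M = Sup {vnorm (M *\<^sub>v x) | x. x \<in> carrier_vec (dim_col M) \<and> vnorm x = 1}"

end

theory Submission
  imports Defs Jordan_Normal_Form.Char_Poly "HOL-Combinatorics.Permutations"
begin

text \<open>
  Write \<open>U\<^sub>1', V\<^sub>1', \<Sigma>\<^sub>1'\<close> for the leading blocks of the perturbed SVD.
  The identity is block algebra: as \<open>\<Sigma>\<close> is diagonal, \<open>U\<^sub>2\<^sup>T A = \<Sigma>\<^sub>2 V\<^sub>2\<^sup>T\<close> and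
  \<open>(A + \<Delta>A) V\<^sub>1' = U\<^sub>1' \<Sigma>\<^sub>1'\<close>. Splitting \<open>\<Delta>A\<close> along \<open>V\<^sub>1 V\<^sub>1\<^sup>T + V\<^sub>2 V\<^sub>2\<^sup>T = I\<close>,
  the first three terms add up to
  \<open>U\<^sub>2 U\<^sub>2\<^sup>T (A + \<Delta>A) V\<^sub>1' \<Sigma>\<^sub>1'\<^sup>-\<^sup>1 = U\<^sub>2 U\<^sub>2\<^sup>T U\<^sub>1' = U\<^sub>1' - U\<^sub>1 Q\<^sub>1 S Q\<^sub>2\<^sup>T\<close>,
  and the last term is \<open>U\<^sub>1 Q\<^sub>1 S Q\<^sub>2\<^sup>T - U\<^sub>1 Q\<close>.

  For the bound, \<open>S = (U\<^sub>1 Q\<^sub>1)\<^sup>T (U\<^sub>1' Q\<^sub>2)\<close> pairs unit columns, so its diagonal entries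
  \<open>s\<^sub>i\<close> lie in \<open>[0, 1]\<close>. Singular values are unique (their squares are the eigenvalues of
  the Gram matrix), so the sorted \<open>s\<^sub>i\<close> are the singular values of \<open>U\<^sub>1\<^sup>T U\<^sub>1'\<close> and
  each \<open>\<surd>(1 - s\<^sub>i\<^sup>2)\<close> is a diagonal entry of \<open>sin \<Theta>\<close>. Finally
  \<open>1 - s\<^sub>i \<le> 1 - s\<^sub>i\<^sup>2\<close>, and the spectral norm of a diagonal matrix is its largest entry
  in absolute value.
\<close>

lemma sum_mult_delta_right:
  fixes N c :: nat
  shows "(\<Sum>l\<in>{0..<N}. f l * (if l = c then 1 else 0)) = (if c < N then f c else (0::real))"
proof -
  have "(\<Sum>l\<in>{0..<N}. f l * (if l = c then 1 else 0)) = (\<Sum>l\<in>{0..<N}. if l = c then f l else 0)"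
    by (rule sum.cong) auto
  also have "\<dots> = (if c \<in> {0..<N} then f c else 0)"
    by (rule sum.delta) simp
  finally show ?thesis
    by simp
qed

lemma sum_mult_delta_left:
  fixes N c :: nat
  shows "(\<Sum>l\<in>{0..<N}. (if l = c then 1 else 0) * f l) = (if c < N then f c else (0::real))"
  using sum_mult_delta_right[of f c N] by (simp add: mult.commute)

lemma sum_lessThan_add_shift:
  fixes a b :: nat
  shows "(\<Sum>l<a + b. g l) = (\<Sum>l<a. g l) + (\<Sum>l<b. g (a + l) :: real)"
  by (induct b) simp_all

text \<open>
  The ring laws of \<open>Matrix\<close> with their carrier premises weakened to dimension equations:
  together with the dimension facts of the factors, a single \<open>simp only\<close> call then
  reassociates or distributes a whole matrix product.
\<close>

lemma assoc_mult_mat_dims: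
  "dim_col A = dim_row B \<Longrightarrow> dim_col B = dim_row C \<Longrightarrow> (A :: real mat) * B * C = A * (B * C)"
  by (rule assoc_mult_mat[of A "dim_row A" "dim_col A" B "dim_col B" C "dim_col C"]) auto

lemma add_mult_distrib_mat_dims:
  "dim_row A = dim_row B \<Longrightarrow> dim_col A = dim_col B \<Longrightarrow> dim_col A = dim_row C \<Longrightarrow>
   ((A :: real mat) + B) * C = A * C + B * C"
  by (rule add_mult_distrib_mat[of A "dim_row A" "dim_col A"]) auto

lemma mult_add_distrib_mat_dims:
  "dim_col A = dim_row B \<Longrightarrow> dim_row B = dim_row C \<Longrightarrow> dim_col B = dim_col C \<Longrightarrow>
   (A :: real mat) * (B + C) = A * B + A * C"
  by (rule mult_add_distrib_mat[of A "dim_row A" "dim_col A" B "dim_col B"]) auto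

lemma minus_mult_distrib_mat_dims:
  "dim_row A = dim_row B \<Longrightarrow> dim_col A = dim_col B \<Longrightarrow> dim_col A = dim_row C \<Longrightarrow>
   ((A :: real mat) - B) * C = A * C - B * C"
  by (rule minus_mult_distrib_mat[of A "dim_row A" "dim_col A"]) auto

lemma mult_minus_distrib_mat_dims:
  "dim_col A = dim_row B \<Longrightarrow> dim_row B = dim_row C \<Longrightarrow> dim_col B = dim_col C \<Longrightarrow>
   (A :: real mat) * (B - C) = A * B - A * C"
  by (rule mult_minus_distrib_mat[of A "dim_row A" "dim_col A" B "dim_col B"]) auto

lemma transpose_mult_dims:
  "dim_col A = dim_row B \<Longrightarrow> transpose_mat ((A :: real mat) * B) = transpose_mat B * transpose_mat A"
  by (rule transpose_mult[of A "dim_row A" "dim_col A" B "dim_col B"]) auto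

lemmas mat_dims = index_mult_mat(2,3) index_transpose_mat(2,3) index_add_mat(2,3)
  index_minus_mat(2,3) index_one_mat(2,3)

lemma orth_mat_carrier: "orth_mat n U \<Longrightarrow> U \<in> carrier_mat n n"
  unfolding orth_mat_def by auto

lemma orth_mat_transpose_mult: "orth_mat n U \<Longrightarrow> transpose_mat U * U = 1\<^sub>m n"
  unfolding orth_mat_def by auto

lemma orth_mat_mult_transpose: "orth_mat n U \<Longrightarrow> U * transpose_mat U = 1\<^sub>m n"
  using mat_mult_left_right_inverse[of "transpose_mat U" n U] unfolding orth_mat_def by auto

lemma orth_mat_transpose: "orth_mat n U \<Longrightarrow> orth_mat n (transpose_mat U)"
  using orth_mat_mult_transpose[of n U] unfolding orth_mat_def by auto

lemma orthonormal_cols_mult_orth_mat: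
  assumes W: "W \<in> carrier_mat N k" "transpose_mat W * W = 1\<^sub>m k" and Q: "orth_mat k Q"
  shows "transpose_mat (W * Q) * (W * Q) = 1\<^sub>m k"
proof -
  have Qc: "Q \<in> carrier_mat k k"
    using Q by (rule orth_mat_carrier)
  note dims = carrier_matD[OF W(1)] carrier_matD[OF Qc]
  have "transpose_mat (W * Q) * (W * Q) = transpose_mat Q * (transpose_mat W * W) * Q"
    by (simp only: transpose_mult_dims assoc_mult_mat_dims dims mat_dims)
  also have "\<dots> = 1\<^sub>m k"
    using W(2) orth_mat_transpose_mult[OF Q] Qc by simp
  finally show ?thesis .
qed

lemma orth_mat_mult: "orth_mat k P \<Longrightarrow> orth_mat k Q \<Longrightarrow> orth_mat k (P * Q)"
  using orthonormal_cols_mult_orth_mat[of P k k Q] orth_mat_carrier[of k Q]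
  unfolding orth_mat_def by auto

lemma col_block_carrier [simp]: "col_block M a k \<in> carrier_mat (dim_row M) k"
  by (simp add: col_block_def)

lemma col_block_carrier_mat: "M \<in> carrier_mat nr N \<Longrightarrow> col_block M a k \<in> carrier_mat nr k"
  by (metis carrier_matD(1) col_block_carrier)

lemma col_block_dims [simp]: "dim_row (col_block M a k) = dim_row M" "dim_col (col_block M a k) = k"
  by (simp_all add: col_block_def)

lemma sub_block_dims [simp]: "dim_row (sub_block M a p b q) = p" "dim_col (sub_block M a p b q) = q"
  by (simp_all add: sub_block_def)

lemma col_block_mult:
  assumes "a + k \<le> dim_col N"
  shows "col_block (M * N) a k = M * col_block N a k"
  by (rule eq_matI) (use assms in \<open>auto simp: col_block_def scalar_prod_def\<close>)

lemma col_block_eq_mult_col_block_one: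
  assumes "M \<in> carrier_mat nr N" and "a + k \<le> N"
  shows "col_block M a k = M * col_block (1\<^sub>m N) a k"
  using col_block_mult[of a k "1\<^sub>m N" M] assms by simp

lemma transpose_col_block_mult_col_block:
  assumes "a + k \<le> dim_col M" and "b + l \<le> dim_col M"
  shows "transpose_mat (col_block M a k) * col_block M b l = sub_block (transpose_mat M * M) a k b l"
  by (rule eq_matI) (use assms in \<open>auto simp: col_block_def sub_block_def scalar_prod_def\<close>)

lemma col_block_orthonormal:
  assumes "orth_mat N U" and "a + k \<le> N"
  shows "transpose_mat (col_block U a k) * col_block U a k = 1\<^sub>m k"
  using assms orth_mat_carrier[OF assms(1)]
  by (intro eq_matI)
    (auto simp: transpose_col_block_mult_col_block orth_mat_transpose_mult sub_block_def)

lemma transpose_orth_mat_mult_col_block: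
  assumes "orth_mat N U" and "a + k \<le> N"
  shows "transpose_mat U * col_block U a k = col_block (1\<^sub>m N) a k"
  using assms orth_mat_carrier[OF assms(1)]
  by (simp add: col_block_mult[symmetric] orth_mat_transpose_mult)

lemma col_block_outer_split:
  assumes M: "M \<in> carrier_mat nr N" and r: "r \<le> N"
  shows "col_block M 0 r * transpose_mat (col_block M 0 r)
       + col_block M r (N - r) * transpose_mat (col_block M r (N - r)) = M * transpose_mat M"
proof (rule eq_matI)
  fix i j
  assume ij: "i < dim_row (M * transpose_mat M)" "j < dim_col (M * transpose_mat M)"
  have "(M * transpose_mat M) $$ (i,j) = (\<Sum>l<r + (N - r). M $$ (i,l) * M $$ (j,l))"
    using M ij r by (simp add: scalar_prod_def atLeast0LessThan)
  also have "\<dots> = (\<Sum>l<r. M $$ (i,l) * M $$ (j,l)) + (\<Sum>l<N - r. M $$ (i,r+l) * M $$ (j,r+l))"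
    by (rule sum_lessThan_add_shift)
  finally show "(col_block M 0 r * transpose_mat (col_block M 0 r)
       + col_block M r (N - r) * transpose_mat (col_block M r (N - r))) $$ (i,j)
       = (M * transpose_mat M) $$ (i,j)"
    using M ij r by (simp add: scalar_prod_def col_block_def atLeast0LessThan)
qed (use M in \<open>auto simp: col_block_def\<close>)

lemma orth_mat_col_block_projections:
  assumes "orth_mat N U" and "r \<le> N"
  shows "col_block U 0 r * transpose_mat (col_block U 0 r)
       + col_block U r (N - r) * transpose_mat (col_block U r (N - r)) = 1\<^sub>m N"
  using col_block_outer_split[OF orth_mat_carrier[OF assms(1)] assms(2)]
    orth_mat_mult_transpose[OF assms(1)] by simp

lemma orth_mat_trailing_projection:
  assumes U: "orth_mat N U" and r: "r \<le> N" and X: "X \<in> carrier_mat N k"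
  shows "col_block U r (N - r) * transpose_mat (col_block U r (N - r)) * X
       = X - col_block U 0 r * (transpose_mat (col_block U 0 r) * X)"
proof -
  define U1 where "U1 = col_block U 0 r"
  define U2 where "U2 = col_block U r (N - r)"
  have Uc: "U \<in> carrier_mat N N"
    using U by (rule orth_mat_carrier)
  have U1c: "U1 \<in> carrier_mat N r" and U2c: "U2 \<in> carrier_mat N (N - r)"
    using Uc by (auto simp: U1_def U2_def)
  have "U2 * transpose_mat U2 = 1\<^sub>m N - U1 * transpose_mat U1"
    unfolding orth_mat_col_block_projections[OF U r, folded U1_def U2_def, symmetric]
    using U1c U2c by (intro eq_matI) auto
  then show ?thesis
    unfolding U1_def[symmetric] U2_def[symmetric]
    by (simp only: minus_mult_distrib_mat_dims assoc_mult_mat_dims left_mult_one_mat'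
        carrier_matD[OF U1c] carrier_matD[OF X] mat_dims)
qed

lemma is_full_svdD:
  assumes "is_full_svd M U Sg V" and "M \<in> carrier_mat n m"
  shows "orth_mat n U" "orth_mat m V" "Sg \<in> carrier_mat n m" "diagonal_mat Sg"
    "\<forall>i<min n m. Sg $$ (i,i) \<ge> 0"
    "\<forall>i j. i \<le> j \<longrightarrow> j < min n m \<longrightarrow> Sg $$ (j,j) \<le> Sg $$ (i,i)"
    "M = U * Sg * transpose_mat V"
  using assms unfolding is_full_svd_def diagonal_mat_def Let_def by auto

lemma transpose_col_block_one_mult_diagonal:
  assumes Sg: "Sg \<in> carrier_mat n m" "diagonal_mat Sg" and r: "r \<le> n" "r \<le> m"
  shows "transpose_mat (col_block (1\<^sub>m n) r (n - r)) * Sg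
       = sub_block Sg r (n - r) r (m - r) * transpose_mat (col_block (1\<^sub>m m) r (m - r))"
proof (rule eq_matI)
  fix i j
  assume "i < dim_row (sub_block Sg r (n - r) r (m - r) * transpose_mat (col_block (1\<^sub>m m) r (m - r)))"
    and "j < dim_col (sub_block Sg r (n - r) r (m - r) * transpose_mat (col_block (1\<^sub>m m) r (m - r)))"
  then have i: "i < n - r" and j: "j < m"
    by (auto simp: sub_block_def)
  have "(transpose_mat (col_block (1\<^sub>m n) r (n - r)) * Sg) $$ (i,j)
      = (\<Sum>l\<in>{0..<n}. (if l = r + i then 1 else 0) * Sg $$ (l,j))"
    using Sg i j by (simp add: scalar_prod_def col_block_def)
  also have "\<dots> = Sg $$ (r + i, j)"
    using i by (simp add: sum_mult_delta_left)
  also have "\<dots> = (\<Sum>l\<in>{0..<m-r}. Sg $$ (r + i, r + l) * (if l = j - r \<and> r \<le> j then 1 else 0))"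
  proof (cases "r \<le> j")
    case True
    then show ?thesis
      using j by (simp add: sum_mult_delta_right)
  next
    case False
    then show ?thesis
      using Sg i j r unfolding diagonal_mat_def by auto
  qed
  also have "\<dots> = (sub_block Sg r (n - r) r (m - r) * transpose_mat (col_block (1\<^sub>m m) r (m - r))) $$ (i,j)"
    using Sg i j by (auto simp: scalar_prod_def col_block_def sub_block_def intro!: sum.cong)
  finally show "(transpose_mat (col_block (1\<^sub>m n) r (n - r)) * Sg) $$ (i,j)
      = (sub_block Sg r (n - r) r (m - r) * transpose_mat (col_block (1\<^sub>m m) r (m - r))) $$ (i,j)" .
qed (use Sg in \<open>auto simp: sub_block_def\<close>)

lemma diagonal_mult_col_block_one:
  assumes Sg: "Sg \<in> carrier_mat n m" "diagonal_mat Sg" and r: "r \<le> n" "r \<le> m"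
  shows "Sg * col_block (1\<^sub>m m) 0 r = col_block (1\<^sub>m n) 0 r * mat_diag r (\<lambda>i. Sg $$ (i,i))"
proof (rule eq_matI)
  fix i j
  assume "i < dim_row (col_block (1\<^sub>m n) 0 r * mat_diag r (\<lambda>i. Sg $$ (i,i)))"
    and "j < dim_col (col_block (1\<^sub>m n) 0 r * mat_diag r (\<lambda>i. Sg $$ (i,i)))"
  then have i: "i < n" and j: "j < r"
    by (auto simp: mat_diag_def)
  have "(Sg * col_block (1\<^sub>m m) 0 r) $$ (i,j) = (\<Sum>l\<in>{0..<m}. Sg $$ (i,l) * (if l = j then 1 else 0))"
    using Sg i j r by (simp add: scalar_prod_def col_block_def)
  also have "\<dots> = Sg $$ (i,j)"
    using j r by (simp add: sum_mult_delta_right)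
  also have "\<dots> = (col_block (1\<^sub>m n) 0 r * mat_diag r (\<lambda>i. Sg $$ (i,i))) $$ (i,j)"
    using Sg i j r unfolding diagonal_mat_def
    by (subst mat_diag_mult_right[of _ n]) (auto simp: col_block_def)
  finally show "(Sg * col_block (1\<^sub>m m) 0 r) $$ (i,j)
      = (col_block (1\<^sub>m n) 0 r * mat_diag r (\<lambda>i. Sg $$ (i,i))) $$ (i,j)" .
qed (use Sg in \<open>auto simp: mat_diag_def\<close>)

lemma svd_trailing_left_block:
  assumes U: "orth_mat n U" and V: "orth_mat m V" and Sg: "Sg \<in> carrier_mat n m" "diagonal_mat Sg"
    and r: "r \<le> n" "r \<le> m"
  shows "transpose_mat (col_block U r (n - r)) * (U * Sg * transpose_mat V)
       = sub_block Sg r (n - r) r (m - r) * transpose_mat (col_block V r (m - r))"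
proof -
  define E where "E = col_block (1\<^sub>m n) r (n - r)"
  define F where "F = col_block (1\<^sub>m m) r (m - r)"
  have Uc: "U \<in> carrier_mat n n" and Vc: "V \<in> carrier_mat m m"
    using U V by (auto dest: orth_mat_carrier)
  note dims = carrier_matD[OF Uc] carrier_matD[OF Vc] carrier_matD[OF Sg(1)]
  have "transpose_mat (col_block U r (n - r)) * (U * Sg * transpose_mat V)
      = transpose_mat (transpose_mat U * col_block U r (n - r)) * Sg * transpose_mat V"
    by (simp only: transpose_mult_dims assoc_mult_mat_dims transpose_transpose dims mat_dims
        col_block_dims sub_block_dims)
  also have "\<dots> = transpose_mat E * Sg * transpose_mat V"
    unfolding E_def using transpose_orth_mat_mult_col_block[OF U] r by simp
  also have "\<dots> = sub_block Sg r (n - r) r (m - r) * transpose_mat (V * F)"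
    unfolding E_def F_def transpose_col_block_one_mult_diagonal[OF Sg r]
    by (simp only: transpose_mult_dims assoc_mult_mat_dims dims mat_dims
        col_block_dims sub_block_dims)
  also have "V * F = col_block V r (m - r)"
    unfolding F_def using col_block_eq_mult_col_block_one[OF Vc] r by simp
  finally show ?thesis .
qed

lemma svd_leading_right_block:
  assumes U: "orth_mat n U" and V: "orth_mat m V" and Sg: "Sg \<in> carrier_mat n m" "diagonal_mat Sg"
    and r: "r \<le> n" "r \<le> m"
  shows "U * Sg * transpose_mat V * col_block V 0 r = col_block U 0 r * mat_diag r (\<lambda>i. Sg $$ (i,i))"
proof -
  have Uc: "U \<in> carrier_mat n n" and Vc: "V \<in> carrier_mat m m"
    using U V by (auto dest: orth_mat_carrier)
  note dims = carrier_matD[OF Uc] carrier_matD[OF Vc] carrier_matD[OF Sg(1)]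
  have "U * Sg * transpose_mat V * col_block V 0 r = U * (Sg * (transpose_mat V * col_block V 0 r))"
    by (simp only: assoc_mult_mat_dims dims mat_dims col_block_dims)
  also have "\<dots> = U * (col_block (1\<^sub>m n) 0 r * mat_diag r (\<lambda>i. Sg $$ (i,i)))"
    using transpose_orth_mat_mult_col_block[OF V] diagonal_mult_col_block_one[OF Sg r] r by simp
  also have "\<dots> = U * col_block (1\<^sub>m n) 0 r * mat_diag r (\<lambda>i. Sg $$ (i,i))"
    by (rule assoc_mult_mat[symmetric, of U n n _ r _ r]) (use Uc in \<open>auto simp: mat_diag_def\<close>)
  also have "\<dots> = col_block U 0 r * mat_diag r (\<lambda>i. Sg $$ (i,i))"
    using col_block_eq_mult_col_block_one[OF Uc] r by simp
  finally show ?thesis .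
qed

lemma svd_leading_right_block_inverse:
  assumes U: "orth_mat n U" and V: "orth_mat m V" and Sg: "Sg \<in> carrier_mat n m" "diagonal_mat Sg"
    and r: "r \<le> n" "r \<le> m" and nz: "\<forall>i<r. Sg $$ (i,i) \<noteq> 0"
  shows "U * Sg * transpose_mat V * (col_block V 0 r * mat_diag r (\<lambda>i. 1 / Sg $$ (i,i)))
       = col_block U 0 r"
proof -
  define D where "D = mat_diag r (\<lambda>i. Sg $$ (i,i))"
  define D' where "D' = mat_diag r (\<lambda>i. 1 / Sg $$ (i,i))"
  have Uc: "U \<in> carrier_mat n n" and Vc: "V \<in> carrier_mat m m"
    using U V by (auto dest: orth_mat_carrier)
  have Dc: "D \<in> carrier_mat r r" and D'c: "D' \<in> carrier_mat r r"
    by (simp_all add: D_def D'_def)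
  have "U * Sg * transpose_mat V * (col_block V 0 r * D')
      = U * Sg * transpose_mat V * col_block V 0 r * D'"
    by (rule assoc_mult_mat[symmetric, of _ n m _ r _ r]) (use Uc Vc Sg(1) D'c in auto)
  also have "\<dots> = col_block U 0 r * D * D'"
    unfolding D_def svd_leading_right_block[OF U V Sg r] ..
  also have "\<dots> = col_block U 0 r * (D * D')"
    by (rule assoc_mult_mat[of _ n r _ r _ r]) (use Uc Dc D'c in auto)
  also have "D * D' = 1\<^sub>m r"
    unfolding D_def D'_def mat_diag_diag using nz by (intro eq_matI) (auto simp: mat_diag_def)
  finally show ?thesis
    using Uc by (simp add: D'_def)
qed

lemma svd_trailing_projection_split:
  fixes n m r :: nat and A dA U Sg V X :: "real mat"
  defines "U2 \<equiv> col_block U r (n - r)"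
    and "V1 \<equiv> col_block V 0 r" and "V2 \<equiv> col_block V r (m - r)"
    and "Sg2 \<equiv> sub_block Sg r (n - r) r (m - r)"
  assumes r: "r \<le> n" "r \<le> m"
    and U: "orth_mat n U" and V: "orth_mat m V" and Sg: "Sg \<in> carrier_mat n m" "diagonal_mat Sg"
    and A: "A = U * Sg * transpose_mat V" and dA: "dA \<in> carrier_mat n m" and X: "X \<in> carrier_mat m k"
  shows "U2 * transpose_mat U2 * dA * V1 * transpose_mat V1 * X
       + U2 * transpose_mat U2 * dA * V2 * transpose_mat V2 * X
       + U2 * Sg2 * transpose_mat V2 * X
       = U2 * transpose_mat U2 * (A + dA) * X"
proof -
  have Uc: "U \<in> carrier_mat n n" and Vc: "V \<in> carrier_mat m m"
    using U V by (auto dest: orth_mat_carrier)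
  have Ac: "A \<in> carrier_mat n m"
    using A Uc Sg(1) Vc by simp
  have U2c: "U2 \<in> carrier_mat n (n - r)" and V1c: "V1 \<in> carrier_mat m r"
    and V2c: "V2 \<in> carrier_mat m (m - r)"
    unfolding U2_def V1_def V2_def by (rule col_block_carrier_mat, fact)+
  have Sg2c: "Sg2 \<in> carrier_mat (n - r) (m - r)"
    by (simp add: Sg2_def sub_block_def)
  note dims = carrier_matD[OF Ac] carrier_matD[OF dA] carrier_matD[OF X] carrier_matD[OF U2c]
    carrier_matD[OF V1c] carrier_matD[OF V2c] carrier_matD[OF Sg2c]
  have V_split: "V1 * transpose_mat V1 + V2 * transpose_mat V2 = 1\<^sub>m m"
    unfolding V1_def V2_def by (rule orth_mat_col_block_projections[OF V r(2)])
  have trailing: "transpose_mat U2 * A = Sg2 * transpose_mat V2"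
    using svd_trailing_left_block[OF U V Sg r] unfolding A U2_def V2_def Sg2_def .
  have "U2 * transpose_mat U2 * dA * V1 * transpose_mat V1 * X
      + U2 * transpose_mat U2 * dA * V2 * transpose_mat V2 * X
      + U2 * Sg2 * transpose_mat V2 * X
      = U2 * transpose_mat U2 * dA * (V1 * transpose_mat V1 + V2 * transpose_mat V2) * X
      + U2 * (transpose_mat U2 * A) * X"
    unfolding trailing
    by (simp only: add_mult_distrib_mat_dims mult_add_distrib_mat_dims assoc_mult_mat_dims dims mat_dims)
  also have "\<dots> = U2 * transpose_mat U2 * dA * X + U2 * transpose_mat U2 * A * X"
    unfolding V_split by (simp only: right_mult_one_mat' assoc_mult_mat_dims dims mat_dims)
  also have "\<dots> = U2 * transpose_mat U2 * A * X + U2 * transpose_mat U2 * dA * X"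
    by (rule comm_add_mat[of _ n k]) (use U2c Ac dA X in auto)
  also have "\<dots> = U2 * transpose_mat U2 * (A + dA) * X"
    by (simp only: add_mult_distrib_mat_dims mult_add_distrib_mat_dims assoc_mult_mat_dims dims mat_dims)
  finally show ?thesis .
qed

lemma minus_telescope_mat:
  "X \<in> carrier_mat n k \<Longrightarrow> Y \<in> carrier_mat n k \<Longrightarrow> Z \<in> carrier_mat n k \<Longrightarrow>
   X - Z = X - Y + (Y - Z :: real mat)"
  by (intro eq_matI) auto

lemma leading_sing_vectors_perturbation_identity:
  fixes n m r :: nat and A dA U Sg V Ut Sgt Vt Q1 S Q2 :: "real mat"
  defines "U1 \<equiv> col_block U 0 r" and "U2 \<equiv> col_block U r (n - r)"
    and "V1 \<equiv> col_block V 0 r" and "V2 \<equiv> col_block V r (m - r)"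
    and "Ut1 \<equiv> col_block Ut 0 r" and "Vt1 \<equiv> col_block Vt 0 r"
    and "Sg2 \<equiv> sub_block Sg r (n - r) r (m - r)"
    and "SgtInv \<equiv> mat_diag r (\<lambda>i. 1 / Sgt $$ (i,i))"
  assumes r: "r \<le> n" "r \<le> m"
    and U: "orth_mat n U" and V: "orth_mat m V" and Sg: "Sg \<in> carrier_mat n m" "diagonal_mat Sg"
    and A: "A = U * Sg * transpose_mat V"
    and Ut: "orth_mat n Ut" and Vt: "orth_mat m Vt"
    and Sgt: "Sgt \<in> carrier_mat n m" "diagonal_mat Sgt" "\<forall>i<r. Sgt $$ (i,i) \<noteq> 0"
    and At: "A + dA = Ut * Sgt * transpose_mat Vt"
    and Q1: "Q1 \<in> carrier_mat r r" and Q2: "Q2 \<in> carrier_mat r r" and S: "S \<in> carrier_mat r r"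
    and cross: "transpose_mat U1 * Ut1 = Q1 * S * transpose_mat Q2"
  shows "Ut1 - U1 * (Q1 * transpose_mat Q2) =
           U2 * transpose_mat U2 * dA * V1 * transpose_mat V1 * Vt1 * SgtInv
         + U2 * transpose_mat U2 * dA * V2 * transpose_mat V2 * Vt1 * SgtInv
         + U2 * Sg2 * transpose_mat V2 * Vt1 * SgtInv
         + U1 * Q1 * (S - 1\<^sub>m r) * transpose_mat Q2"
proof -
  have Uc: "U \<in> carrier_mat n n" and Vc: "V \<in> carrier_mat m m" and Utc: "Ut \<in> carrier_mat n n"
    and Vtc: "Vt \<in> carrier_mat m m"
    using U V Ut Vt by (auto dest: orth_mat_carrier)
  have Ac: "A \<in> carrier_mat n m"
    using A Uc Sg(1) Vc by simp
  have dA: "dA \<in> carrier_mat n m"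
    using arg_cong[OF At, of dim_row] arg_cong[OF At, of dim_col] Utc Sgt(1) Vtc by auto
  have U1c: "U1 \<in> carrier_mat n r" and U2c: "U2 \<in> carrier_mat n (n - r)"
    and V1c: "V1 \<in> carrier_mat m r" and V2c: "V2 \<in> carrier_mat m (m - r)"
    and Ut1c: "Ut1 \<in> carrier_mat n r" and Vt1c: "Vt1 \<in> carrier_mat m r"
    unfolding U1_def U2_def V1_def V2_def Ut1_def Vt1_def by (rule col_block_carrier_mat, fact)+
  have SgtInvc: "SgtInv \<in> carrier_mat r r"
    by (simp add: SgtInv_def mat_diag_def)
  note dims = carrier_matD[OF dA] carrier_matD[OF Q1] carrier_matD[OF Q2] carrier_matD[OF S]
    carrier_matD[OF U1c] carrier_matD[OF U2c] carrier_matD[OF V1c] carrier_matD[OF V2c]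
    carrier_matD[OF Ut1c] carrier_matD[OF Vt1c] carrier_matD[OF SgtInvc]
  have "U2 * transpose_mat U2 * dA * V1 * transpose_mat V1 * Vt1 * SgtInv
      + U2 * transpose_mat U2 * dA * V2 * transpose_mat V2 * Vt1 * SgtInv
      + U2 * Sg2 * transpose_mat V2 * Vt1 * SgtInv
      = U2 * transpose_mat U2 * dA * V1 * transpose_mat V1 * (Vt1 * SgtInv)
      + U2 * transpose_mat U2 * dA * V2 * transpose_mat V2 * (Vt1 * SgtInv)
      + U2 * Sg2 * transpose_mat V2 * (Vt1 * SgtInv)"
    unfolding Sg2_def by (simp only: assoc_mult_mat_dims dims mat_dims sub_block_dims)
  also have "\<dots> = U2 * transpose_mat U2 * (A + dA) * (Vt1 * SgtInv)"
    by (rule svd_trailing_projection_split[OF r U V Sg A dA mult_carrier_mat[OF Vt1c SgtInvc],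
          folded U2_def V1_def V2_def Sg2_def])
  also have "\<dots> = U2 * transpose_mat U2 * ((A + dA) * (Vt1 * SgtInv))"
    by (rule assoc_mult_mat[of _ n n _ m _ r]) (use U2c dA Ac Vt1c SgtInvc in auto)
  also have "(A + dA) * (Vt1 * SgtInv) = Ut1"
    unfolding At Vt1_def SgtInv_def Ut1_def
    by (rule svd_leading_right_block_inverse[OF Ut Vt Sgt(1,2) r Sgt(3)])
  also have "U2 * transpose_mat U2 * Ut1 = Ut1 - U1 * Q1 * S * transpose_mat Q2"
    unfolding U1_def U2_def
    by (simp only: orth_mat_trailing_projection[OF U r(1) Ut1c] cross[unfolded U1_def]
        assoc_mult_mat_dims dims mat_dims col_block_dims)
  finally have first_terms: "U2 * transpose_mat U2 * dA * V1 * transpose_mat V1 * Vt1 * SgtInv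
      + U2 * transpose_mat U2 * dA * V2 * transpose_mat V2 * Vt1 * SgtInv
      + U2 * Sg2 * transpose_mat V2 * Vt1 * SgtInv = Ut1 - U1 * Q1 * S * transpose_mat Q2" .
  have last_term: "U1 * Q1 * (S - 1\<^sub>m r) * transpose_mat Q2
      = U1 * Q1 * S * transpose_mat Q2 - U1 * (Q1 * transpose_mat Q2)"
    by (simp only: mult_minus_distrib_mat_dims minus_mult_distrib_mat_dims assoc_mult_mat_dims
        dims mat_dims right_mult_one_mat' left_mult_one_mat')
  show ?thesis
    unfolding first_terms last_term
    by (intro minus_telescope_mat) (use Ut1c U1c Q1 S Q2 in auto)
qed

lemma order_prod_linear_factors:
  fixes xs :: "real list"
  shows "order c (\<Prod>a\<leftarrow>xs. [:-a, 1:]) = count (mset xs) c"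
proof (induction xs)
  case Nil
  then show ?case
    by simp
next
  case (Cons x xs)
  have "(\<Prod>a\<leftarrow>xs. [:-a, 1:]) \<noteq> 0"
    by (subst prod_list_zero_iff) auto
  then have "[:-x, 1:] * (\<Prod>a\<leftarrow>xs. [:-a, 1:]) \<noteq> 0"
    by (intro no_zero_divisors) simp_all
  then have "order c (\<Prod>a\<leftarrow>x # xs. [:-a, 1:]) = order c [:-x, 1:] + order c (\<Prod>a\<leftarrow>xs. [:-a, 1:])"
    unfolding prod_list.Cons list.map by (rule order_mult)
  moreover have "order c [:-x, 1:] = (if x = c then 1 else 0)"
    using order_power_n_n[of c 1] by (auto intro!: order_0I)
  ultimately show ?case
    using Cons by simp
qed

lemma prod_linear_factors_eq_imp_mset_eq:
  fixes xs ys :: "real list"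
  assumes "(\<Prod>a\<leftarrow>xs. [:-a, 1:]) = (\<Prod>a\<leftarrow>ys. [:-a, 1:])"
  shows "mset xs = mset ys"
  by (rule multiset_eqI) (metis assms order_prod_linear_factors)

lemma transpose_mult_self_diagonal:
  fixes D :: "real mat"
  assumes D: "D \<in> carrier_mat k k" "diagonal_mat D"
  shows "transpose_mat D * D = mat_diag k (\<lambda>i. (D $$ (i,i))\<^sup>2)"
proof (rule eq_matI)
  fix i j
  assume "i < dim_row (mat_diag k (\<lambda>i. (D $$ (i,i))\<^sup>2))" and "j < dim_col (mat_diag k (\<lambda>i. (D $$ (i,i))\<^sup>2))"
  then have i: "i < k" and j: "j < k"
    by (auto simp: mat_diag_def)
  have "(transpose_mat D * D) $$ (i,j) = (\<Sum>l\<in>{0..<k}. (D $$ (l,i) * D $$ (j,j)) * (if l = j then 1 else 0))"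
    using D i j unfolding diagonal_mat_def by (auto simp: scalar_prod_def intro!: sum.cong)
  also have "\<dots> = mat_diag k (\<lambda>i. (D $$ (i,i))\<^sup>2) $$ (i,j)"
    using D i j unfolding diagonal_mat_def by (auto simp: sum_mult_delta_right mat_diag_def power2_eq_square)
  finally show "(transpose_mat D * D) $$ (i,j) = mat_diag k (\<lambda>i. (D $$ (i,i))\<^sup>2) $$ (i,j)" .
qed (use D in \<open>auto simp: mat_diag_def\<close>)

lemma char_poly_gram_svd:
  fixes U D V :: "real mat"
  assumes U: "orth_mat k U" and V: "orth_mat k V" and D: "D \<in> carrier_mat k k" "diagonal_mat D"
  shows "char_poly (transpose_mat (U * D * transpose_mat V) * (U * D * transpose_mat V))
       = (\<Prod>a\<leftarrow>map (\<lambda>i. (D $$ (i,i))\<^sup>2) [0..<k]. [:-a, 1:])"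
proof -
  define G where "G = mat_diag k (\<lambda>i. (D $$ (i,i))\<^sup>2)"
  have Uc: "U \<in> carrier_mat k k" and Vc: "V \<in> carrier_mat k k"
    using U V by (auto dest: orth_mat_carrier)
  have Gc: "G \<in> carrier_mat k k"
    by (simp add: G_def mat_diag_def)
  note dims = carrier_matD[OF Uc] carrier_matD[OF Vc] carrier_matD[OF D(1)]
  have "transpose_mat (U * D * transpose_mat V) * (U * D * transpose_mat V)
      = V * (transpose_mat D * (transpose_mat U * U) * D) * transpose_mat V"
    by (simp only: transpose_mult_dims transpose_transpose assoc_mult_mat_dims dims mat_dims)
  also have "\<dots> = V * G * transpose_mat V"
    unfolding orth_mat_transpose_mult[OF U] G_def transpose_mult_self_diagonal[OF D, symmetric]
    using D(1) by simp
  finally have gram: "transpose_mat (U * D * transpose_mat V) * (U * D * transpose_mat V)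
      = V * G * transpose_mat V" .
  have "similar_mat (V * G * transpose_mat V) G"
    using Vc Gc orth_mat_mult_transpose[OF V] orth_mat_transpose_mult[OF V]
    by (intro similar_matI[where n = k and P = V and Q = "transpose_mat V"]) auto
  moreover have "char_poly G = (\<Prod>a\<leftarrow>diag_mat G. [:-a, 1:])"
    by (rule char_poly_upper_triangular[OF Gc]) (auto simp: upper_triangular_def G_def mat_diag_def)
  moreover have "diag_mat G = map (\<lambda>i. (D $$ (i,i))\<^sup>2) [0..<k]"
    unfolding diag_mat_def G_def mat_diag_def by auto
  ultimately show ?thesis
    unfolding gram by (simp add: char_poly_similar)
qed

lemma square_svd_diag_mset_unique:
  fixes U D V U' D' V' :: "real mat"
  assumes U: "orth_mat k U" and V: "orth_mat k V" and D: "D \<in> carrier_mat k k" "diagonal_mat D"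
    and D_nonneg: "\<forall>i<k. D $$ (i,i) \<ge> 0"
    and U': "orth_mat k U'" and V': "orth_mat k V'" and D': "D' \<in> carrier_mat k k" "diagonal_mat D'"
    and D'_nonneg: "\<forall>i<k. D' $$ (i,i) \<ge> 0"
    and eq: "U * D * transpose_mat V = U' * D' * transpose_mat V'"
  shows "mset (diag_mat D) = mset (diag_mat D')"
proof -
  have squares: "mset (map (\<lambda>i. (D $$ (i,i))\<^sup>2) [0..<k]) = mset (map (\<lambda>i. (D' $$ (i,i))\<^sup>2) [0..<k])"
    by (rule prod_linear_factors_eq_imp_mset_eq)
      (metis char_poly_gram_svd[OF U V D] char_poly_gram_svd[OF U' V' D'] eq)
  have diag_sqrt: "diag_mat E = map sqrt (map (\<lambda>i. (E $$ (i,i))\<^sup>2) [0..<k])"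
    if "E \<in> carrier_mat k k" "\<forall>i<k. E $$ (i,i) \<ge> 0" for E :: "real mat"
    using that by (simp add: diag_mat_def map_eq_conv)
  show ?thesis
    using squares diag_sqrt[OF D(1) D_nonneg] diag_sqrt[OF D'(1) D'_nonneg] by (simp only: mset_map)
qed

lemma sorted_desc_eq_rev_sort:
  fixes xs ys :: "real list"
  assumes "mset xs = mset ys" and "sorted_wrt (\<ge>) xs"
  shows "xs = rev (sort ys)"
proof -
  have "sort ys = rev xs"
    by (rule properties_for_sort) (use assms in \<open>simp_all add: sorted_wrt_rev\<close>)
  then show ?thesis
    by simp
qed

lemma permutation_conj_diagonal:
  fixes S :: "real mat"
  assumes S: "S \<in> carrier_mat k k" "diagonal_mat S" and ms: "mset zs = mset (diag_mat S)"
  shows "\<exists>P. orth_mat k P \<and> P * S * transpose_mat P = mat_diag k (\<lambda>i. zs ! i)"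
proof -
  have len: "length (diag_mat S) = k"
    using S by (simp add: diag_mat_def)
  obtain p where p: "p permutes {..<k}" and pz: "permute_list p (diag_mat S) = zs"
    using mset_eq_permutation[OF ms] len by metis
  have p_lt: "p i < k" if "i < k" for i
    using permutes_in_image[OF p] that by simp
  have p_eq_iff: "p i = p j \<longleftrightarrow> i = j" for i j
    using permutes_inj[OF p] by (auto dest: injD)
  have zs: "zs ! i = S $$ (p i, p i)" if "i < k" for i
    using permute_list_nth[of p "diag_mat S" i] p pz len p_lt[OF that] S that by (auto simp: diag_mat_def)
  define P where "P = mat k k (\<lambda>(i,j). if j = p i then 1 else (0::real))"
  have Pc: "P \<in> carrier_mat k k"
    by (simp add: P_def)
  have PPt: "P * transpose_mat P = 1\<^sub>m k"
    using p_lt p_eq_iff by (intro eq_matI) (auto simp: P_def scalar_prod_def sum_mult_delta_right)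
  have P: "orth_mat k P"
    using mat_mult_left_right_inverse[OF Pc _ PPt] Pc by (simp add: orth_mat_def)
  have PS: "P * S = mat k k (\<lambda>(i,l). S $$ (p i, l))"
    using S(1) p_lt by (intro eq_matI) (auto simp: P_def scalar_prod_def sum_mult_delta_left)
  have "P * S * transpose_mat P = mat_diag k (\<lambda>i. zs ! i)"
    using S p_lt p_eq_iff zs unfolding PS diagonal_mat_def
    by (intro eq_matI) (auto simp: P_def scalar_prod_def sum_mult_delta_right mat_diag_def)
  then show ?thesis
    using P by blast
qed

lemma square_svd_sorted_exists:
  fixes M Q1 S Q2 :: "real mat"
  assumes Q1: "orth_mat k Q1" and Q2: "orth_mat k Q2" and S: "S \<in> carrier_mat k k" "diagonal_mat S"
    and S_nonneg: "\<forall>i<k. S $$ (i,i) \<ge> 0" and M: "M = Q1 * S * transpose_mat Q2"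
  shows "\<exists>U D V. is_full_svd M U D V \<and> (\<forall>i<k. rev (sort (diag_mat S)) ! i = D $$ (i,i))"
proof -
  define zs where "zs = rev (sort (diag_mat S))"
  define D where "D = mat_diag k (\<lambda>i. zs ! i)"
  have len: "length zs = k"
    using S by (simp add: zs_def diag_mat_def)
  have sorted: "sorted_wrt (\<ge>) zs"
    by (simp add: zs_def sorted_wrt_rev)
  have "set zs = set (diag_mat S)"
    by (simp add: zs_def)
  then have zs_nonneg: "zs ! i \<ge> 0" if "i < k" for i
    using that len S_nonneg S(1) nth_mem[of i zs] by (auto simp: diag_mat_def)
  obtain P where P: "orth_mat k P" and PSP: "P * S * transpose_mat P = D"
    using permutation_conj_diagonal[OF S, of zs] unfolding D_def zs_def by auto
  have Q1c: "Q1 \<in> carrier_mat k k" and Q2c: "Q2 \<in> carrier_mat k k" and Pc: "P \<in> carrier_mat k k"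
    using Q1 Q2 P by (auto dest: orth_mat_carrier)
  note dims = carrier_matD[OF Q1c] carrier_matD[OF Q2c] carrier_matD[OF Pc] carrier_matD[OF S(1)]
  have "Q1 * transpose_mat P * D * transpose_mat (Q2 * transpose_mat P)
      = Q1 * (transpose_mat P * P) * S * (transpose_mat P * P) * transpose_mat Q2"
    unfolding PSP[symmetric]
    by (simp only: transpose_mult_dims transpose_transpose assoc_mult_mat_dims dims mat_dims)
  also have "\<dots> = M"
    unfolding orth_mat_transpose_mult[OF P] M using Q1c S(1) by simp
  finally have M_svd: "M = Q1 * transpose_mat P * D * transpose_mat (Q2 * transpose_mat P)" ..
  have "is_full_svd M (Q1 * transpose_mat P) D (Q2 * transpose_mat P)"
    unfolding is_full_svd_def Let_def
  proof (intro conjI allI impI)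
    show "orth_mat (dim_row M) (Q1 * transpose_mat P)" "orth_mat (dim_col M) (Q2 * transpose_mat P)"
      using M Q1c Q2c S(1) orth_mat_mult[OF _ orth_mat_transpose[OF P]] Q1 Q2 by auto
    show "D \<in> carrier_mat (dim_row M) (dim_col M)"
      using M Q1c Q2c S(1) by (simp add: D_def mat_diag_def)
    show "D $$ (i,j) = 0" if "i < dim_row M" "j < dim_col M" "i \<noteq> j" for i j
      using that M Q1c Q2c S(1) by (simp add: D_def mat_diag_def)
    show "D $$ (i,i) \<ge> 0" if "i < min (dim_row M) (dim_col M)" for i
      using that M Q1c Q2c S(1) zs_nonneg by (simp add: D_def mat_diag_def)
    show "D $$ (j,j) \<le> D $$ (i,i)" if "i \<le> j" "j < min (dim_row M) (dim_col M)" for i j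
      using that M Q1c Q2c S(1) sorted len
      by (cases "i = j") (auto simp: D_def mat_diag_def sorted_wrt_iff_nth_less)
  qed (rule M_svd)
  moreover have "\<forall>i<k. zs ! i = D $$ (i,i)"
    by (simp add: D_def mat_diag_def)
  ultimately show ?thesis
    unfolding zs_def by blast
qed

lemma sing_vals_square_svd:
  fixes M Q1 S Q2 :: "real mat"
  assumes Q1: "orth_mat k Q1" and Q2: "orth_mat k Q2" and S: "S \<in> carrier_mat k k" "diagonal_mat S"
    and S_nonneg: "\<forall>i<k. S $$ (i,i) \<ge> 0" and M: "M = Q1 * S * transpose_mat Q2"
  shows "sing_vals M = rev (sort (diag_mat S))"
proof -
  have M_dims: "dim_row M = k" "dim_col M = k"
    using M Q1 Q2 S(1) by (auto dest: orth_mat_carrier)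
  then have Mc: "M \<in> carrier_mat k k"
    by blast
  have unique: "zs = rev (sort (diag_mat S))"
    if "length zs = k" "is_full_svd M U D V" "\<forall>i<length zs. zs ! i = D $$ (i,i)" for zs U D V
  proof -
    note svd = is_full_svdD[OF that(2) Mc, unfolded min.idem]
    have "zs = diag_mat D"
      using that(1,3) svd(3) by (intro nth_equalityI) (auto simp: diag_mat_def)
    moreover have "mset (diag_mat D) = mset (diag_mat S)"
      using svd(7) M by (intro square_svd_diag_mset_unique[OF svd(1-5) Q1 Q2 S S_nonneg]) simp
    moreover have "sorted_wrt (\<ge>) zs"
      using that(1,3) svd(6) by (auto simp: sorted_wrt_iff_nth_less)
    ultimately show ?thesis
      by (simp add: sorted_desc_eq_rev_sort)
  qed
  obtain U D V where svd: "is_full_svd M U D V" "\<forall>i<k. rev (sort (diag_mat S)) ! i = D $$ (i,i)"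
    using square_svd_sorted_exists[OF Q1 Q2 S S_nonneg M] by blast
  have len: "length (rev (sort (diag_mat S))) = k"
    using S(1) by (simp add: diag_mat_def)
  show ?thesis
    unfolding sing_vals_def M_dims min.idem
  proof (rule the_equality)
    show "length (rev (sort (diag_mat S))) = k \<and> (\<exists>U Sg V. is_full_svd M U Sg V \<and>
        (\<forall>i<length (rev (sort (diag_mat S))). rev (sort (diag_mat S)) ! i = Sg $$ (i,i)))"
      using len svd by blast
  qed (use unique in blast)
qed

lemma diagonal_mult_vec_nth:
  fixes D :: "real mat"
  assumes D: "D \<in> carrier_mat k k" "diagonal_mat D" and x: "x \<in> carrier_vec k" and i: "i < k"
  shows "(D *\<^sub>v x) $ i = D $$ (i,i) * x $ i"
proof -
  have "(D *\<^sub>v x) $ i = (\<Sum>l\<in>{0..<k}. (D $$ (i,i) * x $ i) * (if l = i then 1 else 0))"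
    using D x i unfolding diagonal_mat_def by (auto simp: scalar_prod_def intro!: sum.cong)
  also have "\<dots> = D $$ (i,i) * x $ i"
    using i by (simp add: sum_mult_delta_right)
  finally show ?thesis .
qed

lemma vnorm_diagonal_mult_vec_le:
  fixes D :: "real mat"
  assumes D: "D \<in> carrier_mat k k" "diagonal_mat D" and bound: "\<forall>i<k. \<bar>D $$ (i,i)\<bar> \<le> c"
    and c: "c \<ge> 0" and x: "x \<in> carrier_vec k"
  shows "vnorm (D *\<^sub>v x) \<le> c * vnorm x"
proof -
  have "(D *\<^sub>v x) \<bullet> (D *\<^sub>v x) = (\<Sum>i\<in>{0..<k}. (D $$ (i,i))\<^sup>2 * (x $ i)\<^sup>2)"
    using D x diagonal_mult_vec_nth[OF D x] by (simp add: scalar_prod_def power2_eq_square algebra_simps)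
  also have "\<dots> \<le> (\<Sum>i\<in>{0..<k}. c\<^sup>2 * (x $ i)\<^sup>2)"
    using bound by (intro sum_mono mult_right_mono) (auto simp: abs_le_square_iff[symmetric])
  also have "\<dots> = c\<^sup>2 * (x \<bullet> x)"
    using x by (simp add: scalar_prod_def sum_distrib_left power2_eq_square)
  finally have "vnorm (D *\<^sub>v x) \<le> sqrt (c\<^sup>2 * (x \<bullet> x))"
    unfolding vnorm_def by (rule real_sqrt_le_mono)
  also have "\<dots> = c * vnorm x"
    using c unfolding vnorm_def by (simp add: real_sqrt_mult)
  finally show ?thesis .
qed

lemma vnorm_unit_vec: "j < k \<Longrightarrow> vnorm (unit_vec k j :: real vec) = 1"
  by (simp add: vnorm_def scalar_prod_def sum_mult_delta_right)

lemma spec_norm_diagonal_le: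
  fixes D :: "real mat"
  assumes D: "D \<in> carrier_mat k k" "diagonal_mat D" and bound: "\<forall>i<k. \<bar>D $$ (i,i)\<bar> \<le> c"
    and k: "k > 0"
  shows "spec_norm D \<le> c"
  unfolding spec_norm_def
proof (rule cSup_least)
  show "{vnorm (D *\<^sub>v x) |x. x \<in> carrier_vec (dim_col D) \<and> vnorm x = 1} \<noteq> {}"
    using D vnorm_unit_vec[OF k] by (auto intro!: exI[of _ "unit_vec k 0"])
  have c: "c \<ge> 0"
    using bound k by force
  show "y \<le> c" if y: "y \<in> {vnorm (D *\<^sub>v x) |x. x \<in> carrier_vec (dim_col D) \<and> vnorm x = 1}" for y
  proof -
    obtain x where "x \<in> carrier_vec k" "vnorm x = 1" "y = vnorm (D *\<^sub>v x)"
      using y D by auto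
    then show ?thesis
      using vnorm_diagonal_mult_vec_le[OF D bound c] by fastforce
  qed
qed

lemma abs_diag_le_spec_norm_diagonal:
  fixes D :: "real mat"
  assumes D: "D \<in> carrier_mat k k" "diagonal_mat D" and j: "j < k"
  shows "\<bar>D $$ (j,j)\<bar> \<le> spec_norm D"
  unfolding spec_norm_def
proof (rule cSup_upper)
  define c where "c = (\<Sum>l<k. \<bar>D $$ (l,l)\<bar>)"
  have bound: "\<forall>i<k. \<bar>D $$ (i,i)\<bar> \<le> c"
    unfolding c_def by (auto intro: member_le_sum[where f = "\<lambda>l. \<bar>D $$ (l,l)\<bar>", simplified])
  have c: "c \<ge> 0"
    unfolding c_def by (simp add: sum_nonneg)
  show "bdd_above {vnorm (D *\<^sub>v x) |x. x \<in> carrier_vec (dim_col D) \<and> vnorm x = 1}"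
    unfolding bdd_above_def using vnorm_diagonal_mult_vec_le[OF D bound c] D by force
  have "(D *\<^sub>v unit_vec k j) \<bullet> (D *\<^sub>v unit_vec k j)
      = (\<Sum>l\<in>{0..<k}. (D $$ (j,j))\<^sup>2 * (if l = j then 1 else 0))"
    using D j diagonal_mult_vec_nth[OF D unit_vec_carrier[of k j]]
    by (auto simp: scalar_prod_def power2_eq_square intro!: sum.cong)
  also have "\<dots> = (D $$ (j,j))\<^sup>2"
    using j by (simp add: sum_mult_delta_right)
  finally have "vnorm (D *\<^sub>v unit_vec k j) = \<bar>D $$ (j,j)\<bar>"
    by (simp add: vnorm_def)
  then show "\<bar>D $$ (j,j)\<bar> \<in> {vnorm (D *\<^sub>v x) |x. x \<in> carrier_vec (dim_col D) \<and> vnorm x = 1}"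
    using D j vnorm_unit_vec[OF j] by (auto intro!: exI[of _ "unit_vec k j"])
qed

lemma diag_transpose_mult_orthonormal_le_one:
  fixes W W' :: "real mat"
  assumes W: "W \<in> carrier_mat N k" "transpose_mat W * W = 1\<^sub>m k"
    and W': "W' \<in> carrier_mat N k" "transpose_mat W' * W' = 1\<^sub>m k" and i: "i < k"
  shows "(transpose_mat W * W') $$ (i,i) \<le> 1"
proof -
  have unit: "(\<Sum>l\<in>{0..<N}. W $$ (l,i) * W $$ (l,i)) = 1" "(\<Sum>l\<in>{0..<N}. W' $$ (l,i) * W' $$ (l,i)) = 1"
    using arg_cong[OF W(2), of "\<lambda>M. M $$ (i,i)"] arg_cong[OF W'(2), of "\<lambda>M. M $$ (i,i)"] W(1) W'(1) i
    by (simp_all add: scalar_prod_def)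
  have "2 * (\<Sum>l\<in>{0..<N}. W $$ (l,i) * W' $$ (l,i))
      \<le> (\<Sum>l\<in>{0..<N}. W $$ (l,i) * W $$ (l,i)) + (\<Sum>l\<in>{0..<N}. W' $$ (l,i) * W' $$ (l,i))"
    unfolding sum_distrib_left sum.distrib[symmetric]
    using sum_squares_bound by (intro sum_mono) (simp add: power2_eq_square mult.assoc)
  then show ?thesis
    using unit W(1) W'(1) i by (simp add: scalar_prod_def)
qed

lemma cosines_le_one:
  fixes U1 Ut1 Q1 S Q2 :: "real mat"
  assumes U1: "U1 \<in> carrier_mat N r" "transpose_mat U1 * U1 = 1\<^sub>m r"
    and Ut1: "Ut1 \<in> carrier_mat N r" "transpose_mat Ut1 * Ut1 = 1\<^sub>m r"
    and Q1: "orth_mat r Q1" and Q2: "orth_mat r Q2" and S: "S \<in> carrier_mat r r"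
    and cross: "transpose_mat U1 * Ut1 = Q1 * S * transpose_mat Q2" and i: "i < r"
  shows "S $$ (i,i) \<le> 1"
proof -
  have Q1c: "Q1 \<in> carrier_mat r r" and Q2c: "Q2 \<in> carrier_mat r r"
    using Q1 Q2 by (auto dest: orth_mat_carrier)
  note dims = carrier_matD[OF U1(1)] carrier_matD[OF Ut1(1)] carrier_matD[OF Q1c]
    carrier_matD[OF Q2c] carrier_matD[OF S]
  have "transpose_mat (U1 * Q1) * (Ut1 * Q2) = transpose_mat Q1 * (transpose_mat U1 * Ut1) * Q2"
    by (simp only: transpose_mult_dims assoc_mult_mat_dims dims mat_dims)
  also have "\<dots> = (transpose_mat Q1 * Q1) * S * (transpose_mat Q2 * Q2)"
    unfolding cross by (simp only: transpose_mult_dims assoc_mult_mat_dims dims mat_dims)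
  also have "\<dots> = S"
    unfolding orth_mat_transpose_mult[OF Q1] orth_mat_transpose_mult[OF Q2] using S by simp
  finally have "S = transpose_mat (U1 * Q1) * (Ut1 * Q2)" ..
  then show ?thesis
    using diag_transpose_mult_orthonormal_le_one[OF mult_carrier_mat[OF U1(1) Q1c]
        orthonormal_cols_mult_orth_mat[OF U1 Q1] mult_carrier_mat[OF Ut1(1) Q2c]
        orthonormal_cols_mult_orth_mat[OF Ut1 Q2] i] by simp
qed

lemma spec_norm_cosines_minus_one_le_sin_theta_sq:
  fixes U1 Ut1 Q1 S Q2 :: "real mat"
  assumes U1: "U1 \<in> carrier_mat N r" "transpose_mat U1 * U1 = 1\<^sub>m r"
    and Ut1: "Ut1 \<in> carrier_mat N r" "transpose_mat Ut1 * Ut1 = 1\<^sub>m r"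
    and Q1: "orth_mat r Q1" and Q2: "orth_mat r Q2"
    and S: "S \<in> carrier_mat r r" "diagonal_mat S" and S_nonneg: "\<forall>i<r. S $$ (i,i) \<ge> 0"
    and cross: "transpose_mat U1 * Ut1 = Q1 * S * transpose_mat Q2" and r: "r > 0"
  shows "spec_norm (S - 1\<^sub>m r) \<le> (spec_norm (sin_theta U1 Ut1))\<^sup>2"
proof -
  define z where "z = rev (sort (diag_mat S))"
  have z_len: "length z = r"
    using S(1) by (simp add: z_def diag_mat_def)
  have sin_theta: "sin_theta U1 Ut1 = mat_diag r (\<lambda>i. sqrt (1 - (z ! i)\<^sup>2))"
    using sing_vals_square_svd[OF Q1 Q2 S S_nonneg cross] U1(1) by (simp add: sin_theta_def z_def)
  have sin_theta_diagonal: "sin_theta U1 Ut1 \<in> carrier_mat r r" "diagonal_mat (sin_theta U1 Ut1)"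
    unfolding sin_theta by (auto simp: diagonal_mat_def mat_diag_def)
  have "\<bar>(S - 1\<^sub>m r) $$ (i,i)\<bar> \<le> (spec_norm (sin_theta U1 Ut1))\<^sup>2" if i: "i < r" for i
  proof -
    have s: "0 \<le> S $$ (i,i)" "S $$ (i,i) \<le> 1"
      using S_nonneg cosines_le_one[OF U1 Ut1 Q1 Q2 S(1) cross i] i by auto
    have "S $$ (i,i) \<in> set z"
      using S(1) i by (auto simp: z_def diag_mat_def)
    then obtain j where j: "j < r" "z ! j = S $$ (i,i)"
      using z_len by (metis in_set_conv_nth)
    have "sqrt (1 - (S $$ (i,i))\<^sup>2) \<le> spec_norm (sin_theta U1 Ut1)"
      using abs_diag_le_spec_norm_diagonal[OF sin_theta_diagonal j(1)] j by (simp add: sin_theta mat_diag_def)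
    then have "1 - (S $$ (i,i))\<^sup>2 \<le> (spec_norm (sin_theta U1 Ut1))\<^sup>2"
      using s by (metis power_mono real_sqrt_ge_zero real_sqrt_pow2 diff_ge_0_iff_ge power_le_one)
    moreover have "(S $$ (i,i))\<^sup>2 \<le> S $$ (i,i)"
      using s by (simp add: power2_eq_square mult_left_le)
    ultimately show ?thesis
      using S(1) i s by simp
  qed
  moreover have "diagonal_mat (S - 1\<^sub>m r)"
    using S unfolding diagonal_mat_def by auto
  ultimately show ?thesis
    by (intro spec_norm_diagonal_le[OF _ _ _ r]) (use S(1) in auto)
qed

theorem proposition3p11:
  fixes n m r :: nat
    and A dA U Sg V Ut Sgt Vt Q1 S Q2 :: "real mat"
  assumes "A \<in> carrier_mat n m" and "dA \<in> carrier_mat n m"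
    and "1 \<le> r" and "r < n" and "r < m"
    and "is_full_svd A U Sg V"
    and "is_full_svd (A + dA) Ut Sgt Vt"
    and "Sgt $$ (r - 1, r - 1) > 0"
    and "orth_mat r Q1" and "orth_mat r Q2"
    and "S \<in> carrier_mat r r" and "\<forall>i<r. \<forall>j<r. i \<noteq> j \<longrightarrow> S $$ (i,j) = 0"
    and "\<forall>i<r. S $$ (i,i) \<ge> 0"
    and "transpose_mat (col_block U 0 r) * col_block Ut 0 r = Q1 * S * transpose_mat Q2"
  shows "(let U1 = col_block U 0 r; U2 = col_block U r (n - r);
              V1 = col_block V 0 r; V2 = col_block V r (m - r);
              Ut1 = col_block Ut 0 r; Vt1 = col_block Vt 0 r;
              Sg2 = sub_block Sg r (n - r) r (m - r);
              SgtInv = mat_diag r (\<lambda>i. 1 / Sgt $$ (i,i));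
              Q = Q1 * transpose_mat Q2
          in Ut1 - U1 * Q =
               U2 * transpose_mat U2 * dA * V1 * transpose_mat V1 * Vt1 * SgtInv
             + U2 * transpose_mat U2 * dA * V2 * transpose_mat V2 * Vt1 * SgtInv
             + U2 * Sg2 * transpose_mat V2 * Vt1 * SgtInv
             + U1 * Q1 * (S - 1\<^sub>m r) * transpose_mat Q2
           \<and> spec_norm (S - 1\<^sub>m r) \<le> (spec_norm (sin_theta U1 Ut1))\<^sup>2)"
proof -
  have r: "r \<le> n" "r \<le> m" "r > 0"
    using assms(3-5) by auto
  note svd = is_full_svdD[OF assms(6,1)]
  note svdt = is_full_svdD[OF assms(7) add_carrier_mat[OF assms(2), of A]]
  have S: "diagonal_mat S"
    using assms(11,12) unfolding diagonal_mat_def by auto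
  have Sgt_nonzero: "\<forall>i<r. Sgt $$ (i,i) \<noteq> 0"
  proof (intro allI impI)
    fix i
    assume "i < r"
    then have "i \<le> r - 1" and "r - 1 < min n m"
      using assms(4,5) by auto
    then have "Sgt $$ (r - 1, r - 1) \<le> Sgt $$ (i,i)"
      using svdt(6) by blast
    then show "Sgt $$ (i,i) \<noteq> 0"
      using assms(8) by linarith
  qed
  note identity = leading_sing_vectors_perturbation_identity[OF r(1,2) svd(1-4,7) svdt(1-4)
      Sgt_nonzero svdt(7) orth_mat_carrier[OF assms(9)] orth_mat_carrier[OF assms(10)] assms(11,14)]
  have "spec_norm (S - 1\<^sub>m r) \<le> (spec_norm (sin_theta (col_block U 0 r) (col_block Ut 0 r)))\<^sup>2"
    by (rule spec_norm_cosines_minus_one_le_sin_theta_sq[OF col_block_carrier_mat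
          col_block_orthonormal col_block_carrier_mat col_block_orthonormal assms(9,10,11) S assms(13,14) r(3)])
      (use svd(1) svdt(1) r in \<open>auto intro: orth_mat_carrier\<close>)
  then show ?thesis
    unfolding Let_def using identity by blast
qed

end
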